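(* Every rule of the sequent calculus $\mathbf{G}$ for $\text{HXPath}_{\rm D}$ preserves validity: for every instance of every rule of $\mathbf{G}$ (including (Cut), (WL), (WR)), if all premisses of the instance are valid sequents, then its conclusion is a valid sequent.
   Context: Syntax of $\text{HXPath}_{\rm D}$: fix pairwise disjoint sets $\mathsf{Prop}$ (propositions, countably infinite), $\mathsf{Nom}$ (nominals, countably infinite), $\mathsf{Mod}$ (modalities, finite), $\mathsf{Cmp}$ (comparisons, finite). Path expressions $\alpha,\beta ::= \mathsf{a} \mid i{:} \mid \varphi? \mid \alpha\beta$ and node expressions $\varphi,\psi ::= p \mid i \mid \bot \mid \varphi\to\psi \mid @_i\varphi \mid \langle \mathsf{a}\rangle\varphi \mid \langle\alpha =_{\mathsf{c}} \beta\rangle \mid \langle \alpha\neq_{\mathsf{c}}\beta\rangle$, with $p\in\mathsf{Prop}$, $i\in\mathsf{Nom}$, $\mathsf{a}\in\mathsf{Mod}$, $\mathsf{c}\in\mathsf{Cmp}$. Abbreviations: $\top:=\bot\to\bot$, $\neg\varphi:=\varphi\to\bot$, $\varphi\lor\psi := \neg\varphi\to\psi$, $\varphi\land\psi:=\neg(\varphi\to\neg\psi)$, $\varphi\leftrightarrow\psi$ as usual; $\epsilon:=\top?$; $\langle j{:}\rangle\varphi := @_j\varphi$, $\langle\psi?\rangle\varphi:=\psi\land\varphi$, $\langle\alpha\beta\rangle\varphi:=\langle\alpha\rangle\langle\beta\rangle\varphi$, $[\alpha]\varphi:=\neg\langle\alpha\rangle\neg\varphi$. The symbol $\blacktriangle$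 stands for either $=_{\mathsf{c}}$ or $\neq_{\mathsf{c}}$ (for some $\mathsf{c}$). Models: $\mathcal{M}=\langle N,\{R_{\mathsf a}\}_{\mathsf a\in\mathsf{Mod}},\{\approx_{\mathsf c}\}_{\mathsf c\in\mathsf{Cmp}},g,V\rangle$ with $N\neq\emptyset$, each $R_{\mathsf a}\subseteq N\times N$, each $\approx_{\mathsf c}$ an equivalence relation on $N$, $g:\mathsf{Nom}\to N$, $V:\mathsf{Prop}\to 2^N$. Semantics: $\mathcal M,n,n'\Vdash \mathsf a$ iff $nR_{\mathsf a}n'$; $\mathcal M,n,n'\Vdash i{:}$ iff $g(i)=n'$; $\mathcal M,n,n'\Vdash\varphi?$ iff $n=n'$ and $\mathcal M,n\Vdash\varphi$; $\mathcal M,n,n'\Vdash\alpha\beta$ iff there is $n''$ with $\mathcal M,n,n''\Vdash\alpha$ and $\mathcal M,n'',n'\Vdash\beta$; $\mathcal M,n\Vdash p$ iff $n\in V(p)$; $\mathcal M,n\Vdash i$ iff $g(i)=n$; $\bot$ never holds; $\to$ classical; $\mathcal M,n\Vdash @_i\varphi$ iff $\mathcal M,g(i)\Vdash\varphi$; $\mathcal M,n\Vdash\langle\mathsf a\rangle\varphi$ iff some $n'$ has $nR_{\mathsf a}n'$ and $\mathcal M,n'\Vdash\varphi$; $\mathcal M,n\Vdash\langle\alpha=_{\mathsf c}\beta\rangle$ (resp. $\langle\alpha\neq_{\mathsf c}\beta\rangle$) iff there are $n',n''$ with $\mathcal M,n,n'\Vdash\alpha$, $\mathcal M,n,n''\Vdash\beta$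 and $n'\approx_{\mathsf c}n''$ (resp. $n'\not\approx_{\mathsf c}n''$). Sequents: a sequent $\Gamma\vdash\Delta$ consists of finite (possibly empty) sets $\Gamma,\Delta$ of node expressions each of the form $\langle i{:}\blacktriangle j{:}\rangle$ or $@_i\varphi$. It is valid iff for every model $\mathcal M$ and node $n$, if $\mathcal M,n\Vdash\gamma$ for all $\gamma\in\Gamma$ then $\mathcal M,n\Vdash\delta$ for some $\delta\in\Delta$. Notation "$\varphi,\Gamma$" means $\{\varphi\}\cup\Gamma$. The calculus $\mathbf{G}$ (each rule written premisses $\Rightarrow$ conclusion): (Ax) axiom $\varphi,\Gamma\vdash\Delta,\varphi$ where $\varphi$ is of the form $@_ip$, $@_ij$ or $\langle i{:}=_{\mathsf c}j{:}\rangle$; ($\bot$) axiom $@_i\bot,\Gamma\vdash\Delta$; ($\to$L) $\Gamma\vdash\Delta,@_i\varphi$ and $@_i\psi,\Gamma\vdash\Delta$ $\Rightarrow$ $@_i(\varphi\to\psi),\Gamma\vdash\Delta$; ($\to$R) $@_i\varphi,\Gamma\vdash\Delta,@_i\psi\Rightarrow\Gamma\vdash\Delta,@_i(\varphi\to\psi)$; ($@$T) $@_ii,\Gamma\vdash\Delta\Rightarrow\Gamma\vdash\Delta$; ($@5$) $@_jk,@_ij,@_ik,\Gamma\vdash\Delta\Rightarrow @_ij,@_ik,\Gamma\vdash\Delta$; (Nom) $@_ij,\Gamma\vdash\Delta\Rightarrow\Gamma\vdash\Delta$, $j$ not in the conclusion; (S$_1$) $@_j\varphi,@_ij,@_i\varphi,\Gamma\vdash\Delta\Rightarrow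 @_ij,@_i\varphi,\Gamma\vdash\Delta$, $\varphi$ of the form $p$, $\bot$ or $\langle\mathsf a\rangle k$; (S$_2$) $@_i\langle\mathsf a\rangle k,@_jk,@_i\langle\mathsf a\rangle j,\Gamma\vdash\Delta\Rightarrow @_jk,@_i\langle\mathsf a\rangle j,\Gamma\vdash\Delta$; (S$_3$) $\langle j{:}=_{\mathsf c}k{:}\rangle,@_ij,\langle i{:}=_{\mathsf c}k{:}\rangle,\Gamma\vdash\Delta\Rightarrow @_ij,\langle i{:}=_{\mathsf c}k{:}\rangle,\Gamma\vdash\Delta$; ($@$L) $@_i\varphi,\Gamma\vdash\Delta\Rightarrow @_j@_i\varphi,\Gamma\vdash\Delta$; ($@$R) $\Gamma\vdash\Delta,@_i\varphi\Rightarrow\Gamma\vdash\Delta,@_j@_i\varphi$; ($\langle\mathsf a\rangle$L) $@_i\langle\mathsf a\rangle j,@_j\varphi,\Gamma\vdash\Delta\Rightarrow @_i\langle\mathsf a\rangle\varphi,\Gamma\vdash\Delta$, $j$ not in the conclusion; ($\langle\mathsf a\rangle$R) $@_i\langle\mathsf a\rangle j,\Gamma\vdash\Delta,@_i\langle\mathsf a\rangle\varphi,@_j\varphi\Rightarrow @_i\langle\mathsf a\rangle j,\Gamma\vdash\Delta,@_i\langle\mathsf a\rangle\varphi$; ($\langle\blacktriangle\rangle$L) $@_i\langle\alpha\rangle j,@_i\langle\beta\rangle k,\langle j{:}\blacktriangle k{:}\rangle,\Gamma\vdash\Delta\Rightarrow @_i\langle\alpha\blacktriangle\beta\rangle,\Gamma\vdash\Delta$,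 $j,k$ distinct and not in the conclusion; ($\langle\blacktriangle\rangle$R) $@_i\langle\alpha\rangle j,@_i\langle\beta\rangle k,\Gamma\vdash\Delta,@_i\langle\alpha\blacktriangle\beta\rangle,\langle j{:}\blacktriangle k{:}\rangle\Rightarrow @_i\langle\alpha\rangle j,@_i\langle\beta\rangle k,\Gamma\vdash\Delta,@_i\langle\alpha\blacktriangle\beta\rangle$; (EqT) $\langle i{:}=_{\mathsf c}i{:}\rangle,\Gamma\vdash\Delta\Rightarrow\Gamma\vdash\Delta$; (Eq5) $\langle j{:}=_{\mathsf c}k{:}\rangle,\langle i{:}=_{\mathsf c}j{:}\rangle,\langle i{:}=_{\mathsf c}k{:}\rangle,\Gamma\vdash\Delta\Rightarrow\langle i{:}=_{\mathsf c}j{:}\rangle,\langle i{:}=_{\mathsf c}k{:}\rangle,\Gamma\vdash\Delta$; (NEqL) $\Gamma\vdash\Delta,\langle i{:}=_{\mathsf c}j{:}\rangle\Rightarrow\langle i{:}\neq_{\mathsf c}j{:}\rangle,\Gamma\vdash\Delta$; (NEqR) $\langle i{:}=_{\mathsf c}j{:}\rangle,\Gamma\vdash\Delta\Rightarrow\Gamma\vdash\Delta,\langle i{:}\neq_{\mathsf c}j{:}\rangle$; (Cut) $\Gamma\vdash\Delta,\varphi$ and $\varphi,\Gamma'\vdash\Delta'\Rightarrow\Gamma,\Gamma'\vdash\Delta,\Delta'$; (WL) $\Gamma\vdash\Delta\Rightarrow\varphi,\Gamma\vdash\Delta$; (WR) $\Gamma\vdash\Delta\Rightarrow\Gamma\vdash\Delta,\varphi$.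 Here $@_i\langle\alpha\rangle j$ for a path $\alpha$ is understood via the abbreviations above. *)

theory Defs
  imports Main
begin

text \<open>Propositions and nominals are indexed by nat
 (countably infinite); modalities 'm and comparisons 'c range over finite types
 (the finiteness is imposed in the theorem via sort finite).\<close>

datatype ('m, 'c) path =
    PMod 'm
  | PNom nat
  | PTest "('m, 'c) node"
  | PComp "('m, 'c) path" "('m, 'c) path"
and ('m, 'c) node =
    NProp nat
  | NNom nat
  | NBot
  | NImp "('m, 'c) node" "('m, 'c) node"
  | NAt nat "('m, 'c) node"
  | NDia 'm "('m, 'c) node"
  | NEq 'c "('m, 'c) path" "('m, 'c) path"
  | NNeq 'c "('m, 'c) path" "('m, 'c) path"

definition nneg :: "('m,'c) node \<Rightarrow> ('m,'c) node" where
  "nneg \<phi> = NImp \<phi> NBot"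
definition nconj :: "('m,'c) node \<Rightarrow> ('m,'c) node \<Rightarrow> ('m,'c) node" where
  "nconj \<phi> \<psi> = nneg (NImp \<phi> (nneg \<psi>))"

fun pdia :: "('m,'c) path \<Rightarrow> ('m,'c) node \<Rightarrow> ('m,'c) node" where
  "pdia (PMod a) \<phi> = NDia a \<phi>"
| "pdia (PNom j) \<phi> = NAt j \<phi>"
| "pdia (PTest \<psi>) \<phi> = nconj \<psi> \<phi>"
| "pdia (PComp \<alpha> \<beta>) \<phi> = pdia \<alpha> (pdia \<beta> \<phi>)"

text \<open>The comparison <alpha \<blacktriangle> beta>: True = equality =_c, False = inequality \<noteq>_c.\<close>
definition ncmp :: "bool \<Rightarrow> 'c \<Rightarrow> ('m,'c) path \<Rightarrow> ('m,'c) path \<Rightarrow> ('m,'c) node" where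
  "ncmp b c \<alpha> \<beta> = (if b then NEq c \<alpha> \<beta> else NNeq c \<alpha> \<beta>)"

abbreviation eqn :: "'c \<Rightarrow> nat \<Rightarrow> nat \<Rightarrow> ('m,'c) node" where
  "eqn c i j \<equiv> NEq c (PNom i) (PNom j)"
abbreviation neqn :: "'c \<Rightarrow> nat \<Rightarrow> nat \<Rightarrow> ('m,'c) node" where
  "neqn c i j \<equiv> NNeq c (PNom i) (PNom j)"

primrec pnoms :: "('m,'c) path \<Rightarrow> nat set" and nnoms :: "('m,'c) node \<Rightarrow> nat set" where
  "pnoms (PMod a) = {}"
| "pnoms (PNom i) = {i}"
| "pnoms (PTest \<phi>) = nnoms \<phi>"
| "pnoms (PComp \<alpha> \<beta>) = pnoms \<alpha> \<union> pnoms \<beta>"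
| "nnoms (NProp p) = {}"
| "nnoms (NNom i) = {i}"
| "nnoms NBot = {}"
| "nnoms (NImp \<phi> \<psi>) = nnoms \<phi> \<union> nnoms \<psi>"
| "nnoms (NAt i \<phi>) = insert i (nnoms \<phi>)"
| "nnoms (NDia a \<phi>) = nnoms \<phi>"
| "nnoms (NEq c \<alpha> \<beta>) = pnoms \<alpha> \<union> pnoms \<beta>"
| "nnoms (NNeq c \<alpha> \<beta>) = pnoms \<alpha> \<union> pnoms \<beta>"

text \<open>Models. The set of nodes N is the whole type 'w (nonempty automatically).\<close>
record ('w, 'm, 'c) model =
  mR :: "'m \<Rightarrow> 'w \<Rightarrow> 'w \<Rightarrow> bool"
  mE :: "'c \<Rightarrow> 'w \<Rightarrow> 'w \<Rightarrow> bool"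
  mg :: "nat \<Rightarrow> 'w"
  mV :: "nat \<Rightarrow> 'w set"

definition is_model :: "('w,'m,'c) model \<Rightarrow> bool" where
  "is_model M = (\<forall>c. equivp (mE M c))"

primrec psat :: "('w,'m,'c) model \<Rightarrow> ('m,'c) path \<Rightarrow> 'w \<Rightarrow> 'w \<Rightarrow> bool"
and nsat :: "('w,'m,'c) model \<Rightarrow> 'w \<Rightarrow> ('m,'c) node \<Rightarrow> bool" where
  "psat M (PMod a) n n' = mR M a n n'"
| "psat M (PNom i) n n' = (mg M i = n')"
| "psat M (PTest \<phi>) n n' = (n = n' \<and> nsat M n \<phi>)"
| "psat M (PComp \<alpha> \<beta>) n n' = (\<exists>n''. psat M \<alpha> n n'' \<and> psat M \<beta> n'' n')"
| "nsat M n (NProp p) = (n \<in> mV M p)"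
| "nsat M n (NNom i) = (mg M i = n)"
| "nsat M n NBot = False"
| "nsat M n (NImp \<phi> \<psi>) = (nsat M n \<phi> \<longrightarrow> nsat M n \<psi>)"
| "nsat M n (NAt i \<phi>) = nsat M (mg M i) \<phi>"
| "nsat M n (NDia a \<phi>) = (\<exists>n'. mR M a n n' \<and> nsat M n' \<phi>)"
| "nsat M n (NEq c \<alpha> \<beta>) = (\<exists>n' n''. psat M \<alpha> n n' \<and> psat M \<beta> n n'' \<and> mE M c n' n'')"
| "nsat M n (NNeq c \<alpha> \<beta>) = (\<exists>n' n''. psat M \<alpha> n n' \<and> psat M \<beta> n n'' \<and> \<not> mE M c n' n'')"

type_synonym ('m,'c) sequent = "('m,'c) node set \<times> ('m,'c) node set"

definition seq_formula :: "('m,'c) node \<Rightarrow> bool" where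
  "seq_formula \<phi> = ((\<exists>i b c j. \<phi> = ncmp b c (PNom i) (PNom j)) \<or> (\<exists>i \<psi>. \<phi> = NAt i \<psi>))"

definition is_sequent :: "('m,'c) sequent \<Rightarrow> bool" where
  "is_sequent s = (finite (fst s) \<and> finite (snd s) \<and> (\<forall>\<phi> \<in> fst s \<union> snd s. seq_formula \<phi>))"

definition seq_noms :: "('m,'c) sequent \<Rightarrow> nat set" where
  "seq_noms s = (\<Union>\<phi> \<in> fst s \<union> snd s. nnoms \<phi>)"

definition valid :: "'w itself \<Rightarrow> ('m,'c) sequent \<Rightarrow> bool" where
  "valid _ s = (\<forall>M :: ('w,'m,'c) model. is_model M \<longrightarrow>
      (\<forall>n. (\<forall>\<gamma> \<in> fst s. nsat M n \<gamma>) \<longrightarrow> (\<exists>\<delta> \<in> snd s. nsat M n \<delta>)))"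

inductive G_schema :: "('m,'c) sequent list \<Rightarrow> ('m,'c) sequent \<Rightarrow> bool" where
  Ax: "(\<exists>i p. \<phi> = NAt i (NProp p)) \<or> (\<exists>i j. \<phi> = NAt i (NNom j)) \<or> (\<exists>c i j. \<phi> = eqn c i j)
       \<Longrightarrow> G_schema [] (insert \<phi> \<Gamma>, insert \<phi> \<Delta>)"
| Bot: "G_schema [] (insert (NAt i NBot) \<Gamma>, \<Delta>)"
| ImpL: "G_schema [(\<Gamma>, insert (NAt i \<phi>) \<Delta>), (insert (NAt i \<psi>) \<Gamma>, \<Delta>)]
           (insert (NAt i (NImp \<phi> \<psi>)) \<Gamma>, \<Delta>)"
| ImpR: "G_schema [(insert (NAt i \<phi>) \<Gamma>, insert (NAt i \<psi>) \<Delta>)]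
           (\<Gamma>, insert (NAt i (NImp \<phi> \<psi>)) \<Delta>)"
| AtT: "G_schema [(insert (NAt i (NNom i)) \<Gamma>, \<Delta>)] (\<Gamma>, \<Delta>)"
| At5: "G_schema [(insert (NAt j (NNom k)) (insert (NAt i (NNom j)) (insert (NAt i (NNom k)) \<Gamma>)), \<Delta>)]
           (insert (NAt i (NNom j)) (insert (NAt i (NNom k)) \<Gamma>), \<Delta>)"
| Nom: "j \<notin> seq_noms (\<Gamma>, \<Delta>) \<Longrightarrow> G_schema [(insert (NAt i (NNom j)) \<Gamma>, \<Delta>)] (\<Gamma>, \<Delta>)"
| S1: "(\<exists>p. \<phi> = NProp p) \<or> \<phi> = NBot \<or> (\<exists>a k. \<phi> = NDia a (NNom k)) \<Longrightarrow>
       G_schema [(insert (NAt j \<phi>) (insert (NAt i (NNom j)) (insert (NAt i \<phi>) \<Gamma>)), \<Delta>)]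
           (insert (NAt i (NNom j)) (insert (NAt i \<phi>) \<Gamma>), \<Delta>)"
| S2: "G_schema [(insert (NAt i (NDia a (NNom k))) (insert (NAt j (NNom k)) (insert (NAt i (NDia a (NNom j))) \<Gamma>)), \<Delta>)]
           (insert (NAt j (NNom k)) (insert (NAt i (NDia a (NNom j))) \<Gamma>), \<Delta>)"
| S3: "G_schema [(insert (eqn c j k) (insert (NAt i (NNom j)) (insert (eqn c i k) \<Gamma>)), \<Delta>)]
           (insert (NAt i (NNom j)) (insert (eqn c i k) \<Gamma>), \<Delta>)"
| AtL: "G_schema [(insert (NAt i \<phi>) \<Gamma>, \<Delta>)] (insert (NAt j (NAt i \<phi>)) \<Gamma>, \<Delta>)"
| AtR: "G_schema [(\<Gamma>, insert (NAt i \<phi>) \<Delta>)] (\<Gamma>, insert (NAt j (NAt i \<phi>)) \<Delta>)"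
| DiaL: "j \<notin> seq_noms (insert (NAt i (NDia a \<phi>)) \<Gamma>, \<Delta>) \<Longrightarrow>
       G_schema [(insert (NAt i (NDia a (NNom j))) (insert (NAt j \<phi>) \<Gamma>), \<Delta>)]
           (insert (NAt i (NDia a \<phi>)) \<Gamma>, \<Delta>)"
| DiaR: "G_schema [(insert (NAt i (NDia a (NNom j))) \<Gamma>, insert (NAt i (NDia a \<phi>)) (insert (NAt j \<phi>) \<Delta>))]
           (insert (NAt i (NDia a (NNom j))) \<Gamma>, insert (NAt i (NDia a \<phi>)) \<Delta>)"
| CmpL: "j \<noteq> k \<Longrightarrow> j \<notin> seq_noms (insert (NAt i (ncmp b c \<alpha> \<beta>)) \<Gamma>, \<Delta>) \<Longrightarrow>
       k \<notin> seq_noms (insert (NAt i (ncmp b c \<alpha> \<beta>)) \<Gamma>, \<Delta>) \<Longrightarrow>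
       G_schema [(insert (NAt i (pdia \<alpha> (NNom j))) (insert (NAt i (pdia \<beta> (NNom k)))
                    (insert (ncmp b c (PNom j) (PNom k)) \<Gamma>)), \<Delta>)]
           (insert (NAt i (ncmp b c \<alpha> \<beta>)) \<Gamma>, \<Delta>)"
| CmpR: "G_schema [(insert (NAt i (pdia \<alpha> (NNom j))) (insert (NAt i (pdia \<beta> (NNom k))) \<Gamma>),
                    insert (NAt i (ncmp b c \<alpha> \<beta>)) (insert (ncmp b c (PNom j) (PNom k)) \<Delta>))]
           (insert (NAt i (pdia \<alpha> (NNom j))) (insert (NAt i (pdia \<beta> (NNom k))) \<Gamma>),
            insert (NAt i (ncmp b c \<alpha> \<beta>)) \<Delta>)"
| EqT: "G_schema [(insert (eqn c i i) \<Gamma>, \<Delta>)] (\<Gamma>, \<Delta>)"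
| Eq5: "G_schema [(insert (eqn c j k) (insert (eqn c i j) (insert (eqn c i k) \<Gamma>)), \<Delta>)]
           (insert (eqn c i j) (insert (eqn c i k) \<Gamma>), \<Delta>)"
| NEqL: "G_schema [(\<Gamma>, insert (eqn c i j) \<Delta>)] (insert (neqn c i j) \<Gamma>, \<Delta>)"
| NEqR: "G_schema [(insert (eqn c i j) \<Gamma>, \<Delta>)] (\<Gamma>, insert (neqn c i j) \<Delta>)"
| Cut: "G_schema [(\<Gamma>, insert \<phi> \<Delta>), (insert \<phi> \<Gamma>', \<Delta>')] (\<Gamma> \<union> \<Gamma>', \<Delta> \<union> \<Delta>')"
| WL: "G_schema [(\<Gamma>, \<Delta>)] (insert \<phi> \<Gamma>, \<Delta>)"
| WR: "G_schema [(\<Gamma>, \<Delta>)] (\<Gamma>, insert \<phi> \<Delta>)"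

definition G_instance :: "('m,'c) sequent list \<Rightarrow> ('m,'c) sequent \<Rightarrow> bool" where
  "G_instance ps s = (G_schema ps s \<and> is_sequent s \<and> (\<forall>p \<in> set ps. is_sequent p))"

end

theory Submission
  imports Defs
begin

text \<open>The rules that enlarge the antecedent without
  a side condition ((@T), (@5), (S1)--(S3), (EqT), (Eq5)) add a formula that already holds
  wherever the antecedent of the conclusion holds. The eigenvariable rules (Nom),
  (\<open>\<langle>a\<rangle>\<close>L) and (\<open>\<langle>\<blacktriangle>\<rangle>\<close>L) are sound because satisfaction only depends on the
  denotations of the nominals that occur, so a fresh nominal can be reinterpreted as the
  node witnessing the premiss.\<close>

lemma
  shows psat_update_mg: "(\<forall>x\<in>pnoms \<alpha>. g x = mg M x) \<Longrightarrow> psat (M\<lparr>mg := g\<rparr>) \<alpha> n n' = psat M \<alpha> n n'"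
    and nsat_update_mg: "(\<forall>x\<in>nnoms \<phi>. g x = mg M x) \<Longrightarrow> nsat (M\<lparr>mg := g\<rparr>) n \<phi> = nsat M n \<phi>"
  by (induction \<alpha> and \<phi> arbitrary: n n' and n) auto

lemma is_model_update_mg: "is_model M \<Longrightarrow> is_model (M\<lparr>mg := g\<rparr>)"
  by (simp add: is_model_def)

lemma is_model_mE_refl: "is_model M \<Longrightarrow> mE M c x x"
  unfolding is_model_def by (meson equivp_reflp)

lemma is_model_mE_euclidean: "is_model M \<Longrightarrow> mE M c x y \<Longrightarrow> mE M c x z \<Longrightarrow> mE M c y z"
  unfolding is_model_def by (meson equivp_symp equivp_transp)

lemma nsat_pdia: "nsat M n (pdia \<alpha> \<phi>) = (\<exists>n'. psat M \<alpha> n n' \<and> nsat M n' \<phi>)"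
  by (induction \<alpha> arbitrary: n \<phi>) (auto simp: nconj_def nneg_def)

lemma nsat_ncmp:
  "nsat M n (ncmp b c \<alpha> \<beta>) = (\<exists>n' n''. psat M \<alpha> n n' \<and> psat M \<beta> n n'' \<and> mE M c n' n'' = b)"
  by (cases b) (auto simp: ncmp_def)

lemma nnoms_ncmp: "nnoms (ncmp b c \<alpha> \<beta>) = pnoms \<alpha> \<union> pnoms \<beta>"
  by (simp add: ncmp_def)

lemma nsat_update_seq_noms:
  assumes "\<forall>x\<in>seq_noms (\<Gamma>, \<Delta>). g x = mg M x" and "\<phi> \<in> \<Gamma> \<union> \<Delta>"
  shows "nsat (M\<lparr>mg := g\<rparr>) n \<phi> = nsat M n \<phi>"
  using assms by (intro nsat_update_mg) (auto simp: seq_noms_def)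

lemma validI:
  fixes \<Gamma> \<Delta> :: "('m, 'c) node set"
  assumes "\<And>M :: ('w, 'm, 'c) model. \<And>n. is_model M \<Longrightarrow> \<forall>\<gamma>\<in>\<Gamma>. nsat M n \<gamma> \<Longrightarrow> \<exists>\<delta>\<in>\<Delta>. nsat M n \<delta>"
  shows "valid TYPE('w) (\<Gamma>, \<Delta>)"
  using assms by (simp add: valid_def)

lemma validD:
  fixes M :: "('w, 'm, 'c) model"
  assumes "valid TYPE('w) (\<Gamma>, \<Delta>)" and "is_model M" and "\<forall>\<gamma>\<in>\<Gamma>. nsat M n \<gamma>"
  shows "\<exists>\<delta>\<in>\<Delta>. nsat M n \<delta>"
  using assms by (simp add: valid_def)

lemma valid_remove_entailed:
  fixes \<Gamma> \<Delta> :: "('m, 'c) node set"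
  assumes "valid TYPE('w) (insert \<phi> \<Gamma>, \<Delta>)"
    and "\<And>M :: ('w, 'm, 'c) model. \<And>n. is_model M \<Longrightarrow> \<forall>\<gamma>\<in>\<Gamma>. nsat M n \<gamma> \<Longrightarrow> nsat M n \<phi>"
  shows "valid TYPE('w) (\<Gamma>, \<Delta>)"
proof (rule validI)
  fix M :: "('w, 'm, 'c) model" and n
  assume "is_model M" and "\<forall>\<gamma>\<in>\<Gamma>. nsat M n \<gamma>"
  moreover from calculation have "nsat M n \<phi>" by (rule assms(2))
  ultimately show "\<exists>\<delta>\<in>\<Delta>. nsat M n \<delta>" using validD[OF assms(1)] by simp
qed

lemma valid_reinterpret_fresh:
  fixes \<Gamma> \<Gamma>' \<Delta> :: "('m, 'c) node set"
  assumes valid: "valid TYPE('w) (\<Gamma>', \<Delta>)"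
    and witness: "\<And>M :: ('w, 'm, 'c) model. \<And>n. is_model M \<Longrightarrow> \<forall>\<gamma>\<in>\<Gamma>. nsat M n \<gamma> \<Longrightarrow>
      \<exists>g. (\<forall>x\<in>seq_noms (\<Gamma>, \<Delta>). g x = mg M x) \<and> (\<forall>\<gamma>\<in>\<Gamma>'. nsat (M\<lparr>mg := g\<rparr>) n \<gamma>)"
  shows "valid TYPE('w) (\<Gamma>, \<Delta>)"
proof (rule validI)
  fix M :: "('w, 'm, 'c) model" and n
  assume "is_model M" and "\<forall>\<gamma>\<in>\<Gamma>. nsat M n \<gamma>"
  then obtain g where agree: "\<forall>x\<in>seq_noms (\<Gamma>, \<Delta>). g x = mg M x"
    and sat': "\<forall>\<gamma>\<in>\<Gamma>'. nsat (M\<lparr>mg := g\<rparr>) n \<gamma>"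
    using witness by blast
  obtain \<delta> where "\<delta> \<in> \<Delta>" and "nsat (M\<lparr>mg := g\<rparr>) n \<delta>"
    using validD[OF valid is_model_update_mg[OF \<open>is_model M\<close>] sat'] by blast
  moreover have "nsat (M\<lparr>mg := g\<rparr>) n \<delta> = nsat M n \<delta>"
    using agree \<open>\<delta> \<in> \<Delta>\<close> by (intro nsat_update_seq_noms) auto
  ultimately show "\<exists>\<delta>\<in>\<Delta>. nsat M n \<delta>" by blast
qed

lemma sound_Nom:
  fixes \<Gamma> \<Delta> :: "('m, 'c) node set"
  assumes fresh: "j \<notin> seq_noms (\<Gamma>, \<Delta>)"
    and "valid TYPE('w) (insert (NAt i (NNom j)) \<Gamma>, \<Delta>)"
  shows "valid TYPE('w) (\<Gamma>, \<Delta>)"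
proof (rule valid_reinterpret_fresh[OF assms(2)], goal_cases)
  case (1 M n)
  define g where "g = (mg M)(j := mg M i)"
  have agree: "\<forall>x\<in>seq_noms (\<Gamma>, \<Delta>). g x = mg M x"
    using fresh by (auto simp: g_def)
  have "\<forall>\<gamma>\<in>\<Gamma>. nsat (M\<lparr>mg := g\<rparr>) n \<gamma>"
    using 1 nsat_update_seq_noms[OF agree] by blast
  then show ?case
    using agree by (intro exI[of _ g]) (simp add: g_def)
qed

lemma sound_DiaL:
  fixes \<Gamma> \<Delta> :: "('m, 'c) node set"
  assumes fresh: "j \<notin> seq_noms (insert (NAt i (NDia a \<phi>)) \<Gamma>, \<Delta>)"
    and "valid TYPE('w) (insert (NAt i (NDia a (NNom j))) (insert (NAt j \<phi>) \<Gamma>), \<Delta>)"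
  shows "valid TYPE('w) (insert (NAt i (NDia a \<phi>)) \<Gamma>, \<Delta>)"
proof (rule valid_reinterpret_fresh[OF assms(2)], goal_cases)
  case (1 M n)
  then obtain w where w: "mR M a (mg M i) w" "nsat M w \<phi>" by auto
  define g where "g = (mg M)(j := w)"
  have agree: "\<forall>x\<in>seq_noms (insert (NAt i (NDia a \<phi>)) \<Gamma>, \<Delta>). g x = mg M x"
    using fresh by (auto simp: g_def)
  have "\<forall>\<gamma>\<in>\<Gamma>. nsat (M\<lparr>mg := g\<rparr>) n \<gamma>"
    using 1 nsat_update_seq_noms[OF agree] by blast
  moreover have "i \<noteq> j" and "j \<notin> nnoms \<phi>"
    using fresh by (auto simp: seq_noms_def)
  then have "nsat (M\<lparr>mg := g\<rparr>) w \<phi>"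
    using w by (subst nsat_update_mg) (auto simp: g_def)
  ultimately show ?case
    using agree w \<open>i \<noteq> j\<close> by (intro exI[of _ g]) (simp add: g_def)
qed

lemma sound_CmpL:
  fixes \<Gamma> \<Delta> :: "('m, 'c) node set"
  assumes "j \<noteq> k"
    and fresh: "j \<notin> seq_noms (insert (NAt i (ncmp b c \<alpha> \<beta>)) \<Gamma>, \<Delta>)"
      "k \<notin> seq_noms (insert (NAt i (ncmp b c \<alpha> \<beta>)) \<Gamma>, \<Delta>)"
    and "valid TYPE('w) (insert (NAt i (pdia \<alpha> (NNom j))) (insert (NAt i (pdia \<beta> (NNom k)))
      (insert (ncmp b c (PNom j) (PNom k)) \<Gamma>)), \<Delta>)"
  shows "valid TYPE('w) (insert (NAt i (ncmp b c \<alpha> \<beta>)) \<Gamma>, \<Delta>)"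
proof (rule valid_reinterpret_fresh[OF assms(4)], goal_cases)
  case (1 M n)
  then obtain w w' where w: "psat M \<alpha> (mg M i) w" "psat M \<beta> (mg M i) w'" "mE M c w w' = b"
    by (auto simp: nsat_ncmp)
  define g where "g = (mg M)(j := w, k := w')"
  have agree: "\<forall>x\<in>seq_noms (insert (NAt i (ncmp b c \<alpha> \<beta>)) \<Gamma>, \<Delta>). g x = mg M x"
    using fresh by (auto simp: g_def)
  have "\<forall>\<gamma>\<in>\<Gamma>. nsat (M\<lparr>mg := g\<rparr>) n \<gamma>"
    using 1 nsat_update_seq_noms[OF agree] by blast
  moreover have "i \<noteq> j" "i \<noteq> k" "\<forall>x\<in>pnoms \<alpha>. g x = mg M x" "\<forall>x\<in>pnoms \<beta>. g x = mg M x"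
    using fresh by (auto simp: seq_noms_def nnoms_ncmp g_def)
  then have "psat (M\<lparr>mg := g\<rparr>) \<alpha> (mg M i) w" "psat (M\<lparr>mg := g\<rparr>) \<beta> (mg M i) w'"
    using w by (simp_all add: psat_update_mg)
  ultimately show ?case
    using \<open>i \<noteq> j\<close> \<open>i \<noteq> k\<close> \<open>j \<noteq> k\<close> agree w
    by (intro exI[of _ g]) (auto simp: g_def nsat_pdia nsat_ncmp)
qed

lemma sound_CmpR:
  fixes \<Gamma> \<Delta> :: "('m, 'c) node set"
  assumes "valid TYPE('w) (insert (NAt i (pdia \<alpha> (NNom j))) (insert (NAt i (pdia \<beta> (NNom k))) \<Gamma>),
      insert (NAt i (ncmp b c \<alpha> \<beta>)) (insert (ncmp b c (PNom j) (PNom k)) \<Delta>))"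
  shows "valid TYPE('w) (insert (NAt i (pdia \<alpha> (NNom j))) (insert (NAt i (pdia \<beta> (NNom k))) \<Gamma>),
      insert (NAt i (ncmp b c \<alpha> \<beta>)) \<Delta>)"
proof (rule validI)
  fix M :: "('w, 'm, 'c) model" and n
  assume "is_model M" and sat: "\<forall>\<gamma>\<in>insert (NAt i (pdia \<alpha> (NNom j))) (insert (NAt i (pdia \<beta> (NNom k))) \<Gamma>).
      nsat M n \<gamma>"
  have "psat M \<alpha> (mg M i) (mg M j)" and "psat M \<beta> (mg M i) (mg M k)"
    using sat by (auto simp: nsat_pdia)
  then have "nsat M n (ncmp b c (PNom j) (PNom k)) \<Longrightarrow> nsat M n (NAt i (ncmp b c \<alpha> \<beta>))"
    by (auto simp: nsat_ncmp)
  then show "\<exists>\<delta>\<in>insert (NAt i (ncmp b c \<alpha> \<beta>)) \<Delta>. nsat M n \<delta>"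
    using validD[OF assms \<open>is_model M\<close> sat] by blast
qed

theorem G_schema_sound:
  fixes ps :: "('m, 'c) sequent list" and s :: "('m, 'c) sequent"
  assumes "G_schema ps s" and "\<forall>p \<in> set ps. valid TYPE('w) p"
  shows "valid TYPE('w) s"
  using assms
proof (induction rule: G_schema.induct)
  case (AtT i \<Gamma> \<Delta>)
  then show ?case by (auto intro: valid_remove_entailed)
next
  case (At5 j k i \<Gamma> \<Delta>)
  then show ?case by (auto intro: valid_remove_entailed)
next
  case (S1 \<phi> j i \<Gamma> \<Delta>)
  then show ?case by (auto intro: valid_remove_entailed)
next
  case (S2 i a k j \<Gamma> \<Delta>)
  then show ?case by (auto intro: valid_remove_entailed)
next
  case (S3 c j k i \<Gamma> \<Delta>)
  then show ?case by (auto intro: valid_remove_entailed)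
next
  case (EqT c i \<Gamma> \<Delta>)
  then have "valid TYPE('w) (insert (eqn c i i) \<Gamma>, \<Delta>)" by simp
  then show ?case by (rule valid_remove_entailed) (simp add: is_model_mE_refl)
next
  case (Eq5 c j k i \<Gamma> \<Delta>)
  then have "valid TYPE('w) (insert (eqn c j k) (insert (eqn c i j) (insert (eqn c i k) \<Gamma>)), \<Delta>)"
    by simp
  then show ?case by (rule valid_remove_entailed) (auto intro: is_model_mE_euclidean)
next
  case (Nom j \<Gamma> \<Delta> i)
  then show ?case by (simp add: sound_Nom)
next
  case (DiaL j i a \<phi> \<Gamma> \<Delta>)
  then show ?case by (simp add: sound_DiaL)
next
  case (CmpL j k i b c \<alpha> \<beta> \<Gamma> \<Delta>)
  then show ?case by (simp add: sound_CmpL)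
next
  case (CmpR i \<alpha> j \<beta> k \<Gamma> b c \<Delta>)
  then show ?case by (simp add: sound_CmpR)
qed (simp add: valid_def; blast)+
  \<comment> \<open>the axioms, (\<open>\<rightarrow>\<close>L/R), (@L/R), (\<open>\<langle>a\<rangle>\<close>R), (NEqL/R), (Cut) and weakening\<close>

theorem lemma1:
  fixes ps :: "('m::finite, 'c::finite) sequent list" and s :: "('m, 'c) sequent"
  assumes "G_instance ps s"
    and "\<forall>p \<in> set ps. valid TYPE('w) p"
  shows "valid TYPE('w) s"
  using assms G_schema_sound unfolding G_instance_def by blast

end
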